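(* Let $f(x,y)=\tfrac12(x^2+y^2)$ and let $p_1,\dots,p_n\in Q$ be pairwise distinct with $M_{W_i}>0$. Then the performance function $$\mathcal H(p_1,\dots,p_n)=\int_Q\min_{(a,b)\in C}\tfrac12\big(\|q-p_a\|^2+\|q-p_b\|^2\big)\phi(q)\,dq$$ satisfies $$\frac{\partial\mathcal H}{\partial p_i}=-\sum_{\mathcal T_{ij}\in\mathcal P_i}M_{V_{\mathcal T_{ij}}}\big(C_{V_{\mathcal T_{ij}}}-p_i\big)=-M_{W_i}\,(C_{W_i}-p_i).$$
   Context: $Q\subset\mathbb{R}^2$ is a compact convex polygon, $\phi:Q\to[0,\infty)$ a $C^2$ density, $n\ge3$, $C=\{(a,b):1\le a<b\le n\}$. For $i\neq j$, $V_{\mathcal T_{ij}}=\{q\in Q:\|q-p_v\|\le\|q-p_w\|\ \forall v\in\{i,j\},\ w\notin\{i,j\}\}$ is the order-2 Voronoi cell generated by $\{p_i,p_j\}$; $\mathcal P_i$ is the collection of all such cells' generating pairs containing $i$. Mass and centroid: $M_{V}=\int_V\phi(q)dq$, $C_V=\frac{1}{M_V}\int_V q\phi(q)dq$. $W_i=\bigcup_{\mathcal T_{ij}\in\mathcal P_i}V_{\mathcal T_{ij}}$, $M_{W_i}=\sum_{\mathcal T_{ij}\in\mathcal P_i}M_{V_{\mathcal T_{ij}}}$, $C_{W_i}=\frac{1}{M_{W_i}}\sum_{\mathcal T_{ij}\in\mathcal P_i}M_{V_{\mathcal T_{ij}}}C_{V_{\mathcal T_{ij}}}$. *)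

theory Defs
  imports "HOL-Analysis.Analysis"
begin

type_synonym pt = "real^2"

definition C2_on :: "pt set \<Rightarrow> (pt \<Rightarrow> real) \<Rightarrow> bool" where
  "C2_on U f \<longleftrightarrow> (\<exists>(f' :: pt \<Rightarrow> pt \<Rightarrow>\<^sub>L real) (f'' :: pt \<Rightarrow> pt \<Rightarrow>\<^sub>L (pt \<Rightarrow>\<^sub>L real)).
      (\<forall>x\<in>U. (f has_derivative blinfun_apply (f' x)) (at x)) \<and>
      (\<forall>x\<in>U. (f' has_derivative blinfun_apply (f'' x)) (at x)) \<and>
      continuous_on U f'')"

definition vor2 :: "pt set \<Rightarrow> nat \<Rightarrow> (nat \<Rightarrow> pt) \<Rightarrow> nat \<Rightarrow> nat \<Rightarrow> pt set" where
  "vor2 Q n p i j = {q \<in> Q. \<forall>v\<in>{i, j}. \<forall>w\<in>{1..n} - {i, j}. dist q (p v) \<le> dist q (p w)}"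

text \<open>Indices j such that T_ij is (the generating pair of) an order-2 Voronoi cell, i.e. in P_i.\<close>
definition Pidx :: "pt set \<Rightarrow> nat \<Rightarrow> (nat \<Rightarrow> pt) \<Rightarrow> nat \<Rightarrow> nat set" where
  "Pidx Q n p i = {j \<in> {1..n}. j \<noteq> i \<and> vor2 Q n p i j \<noteq> {}}"

definition mass :: "(pt \<Rightarrow> real) \<Rightarrow> pt set \<Rightarrow> real" where
  "mass \<phi> V = integral V \<phi>"

definition centroid :: "(pt \<Rightarrow> real) \<Rightarrow> pt set \<Rightarrow> pt" where
  "centroid \<phi> V = (1 / mass \<phi> V) *\<^sub>R integral V (\<lambda>q. \<phi> q *\<^sub>R q)"

definition massW :: "pt set \<Rightarrow> (pt \<Rightarrow> real) \<Rightarrow> nat \<Rightarrow> (nat \<Rightarrow> pt) \<Rightarrow> nat \<Rightarrow> real" where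
  "massW Q \<phi> n p i = (\<Sum>j\<in>Pidx Q n p i. mass \<phi> (vor2 Q n p i j))"

definition centroidW :: "pt set \<Rightarrow> (pt \<Rightarrow> real) \<Rightarrow> nat \<Rightarrow> (nat \<Rightarrow> pt) \<Rightarrow> nat \<Rightarrow> pt" where
  "centroidW Q \<phi> n p i = (1 / massW Q \<phi> n p i) *\<^sub>R
     (\<Sum>j\<in>Pidx Q n p i. mass \<phi> (vor2 Q n p i j) *\<^sub>R centroid \<phi> (vor2 Q n p i j))"

definition perfH :: "pt set \<Rightarrow> (pt \<Rightarrow> real) \<Rightarrow> nat \<Rightarrow> (nat \<Rightarrow> pt) \<Rightarrow> real" where
  "perfH Q \<phi> n p = integral Q (\<lambda>q.
     (Min ((\<lambda>(a, b). (1/2) * ((norm (q - p a))\<^sup>2 + (norm (q - p b))\<^sup>2))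
            ` {(a, b). 1 \<le> a \<and> a < b \<and> b \<le> n})) * \<phi> q)"

end

theory Submission
  imports Defs
begin

text \<open>
  Write f k = |q - p k|^2 and K = {1..n} - {i}. For fixed q, the cheapest pair either avoids i,
  costing half the sum of the two smallest f k over K, or contains i, costing half of
  f i plus the smallest f k over K. So when p i is moved to y the integrand of H splits as a term independent of y
  plus min (m q) (|q - y|^2 / 2), where m q is half the squared distance from q to its
  second-nearest generator in K. A quadratic capped at a continuous level is differentiated under
  the integral: the minimum can switch branches only in a band around the tie set
  {|q - y|^2 / 2 = m q}, whose measure tends to 0 because the tie set lies in finitely many
  bisector lines. The resulting gradient is the integral of phi q (y - q) over the points for which
  p i is one of the two nearest generators, i.e. over the union of the order-2 cells containing i;
  splitting it cell by cell gives the sum of M (C - p i).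
\<close>

lemma integrable_continuous_compact:
  fixes f :: "'a::euclidean_space \<Rightarrow> 'b::euclidean_space"
  assumes "compact S" "continuous_on S f"
  shows "f integrable_on S"
  using set_borel_integral_eq_integral(1)[unfolded set_integrable_def, OF borel_integrable_compact[OF assms]] .

lemma compact_Collect_le:
  fixes f g :: "'a::t2_space \<Rightarrow> real"
  assumes S: "compact S" and "continuous_on S f" "continuous_on S g"
  shows "compact {x \<in> S. f x \<le> g x}"
proof -
  have "closed {x \<in> S. f x \<le> g x}"
    using assms by (intro continuous_on_closed_Collect_le compact_imp_closed)
  then show ?thesis
    using compact_Int_closed[OF S] by (metis (no_types, lifting) Int_absorb1 mem_Collect_eq subsetI)
qed

lemma has_integral_const_restrict:
  fixes S T :: "'a::euclidean_space set"
  assumes "S \<in> lmeasurable" "S \<subseteq> T"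
  shows "((\<lambda>x. if x \<in> S then c else 0) has_integral c * measure lebesgue S) T"
proof -
  have "((\<lambda>x. c * 1) has_integral c * integral S (\<lambda>x. 1)) S"
    using integrable_on_const[OF assms(1), of 1] by (intro has_integral_mult_right integrable_integral)
  then show ?thesis
    using assms by (simp add: lmeasure_integral)
qed

lemma continuous_on_Min_image:
  fixes g :: "'i \<Rightarrow> 'a::topological_space \<Rightarrow> real"
  assumes "finite K" "K \<noteq> {}" "\<And>k. k \<in> K \<Longrightarrow> continuous_on S (g k)"
  shows "continuous_on S (\<lambda>x. Min ((\<lambda>k. g k x) ` K))"
  using assms
proof (induction K rule: finite_ne_induct)
  case (insert k K)
  then show ?case
    by (auto simp: Min_insert intro!: continuous_on_min)
qed simp

lemma Min_image_attained:
  fixes f :: "'i \<Rightarrow> 'a::linorder"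
  assumes "finite K" "K \<noteq> {}"
  obtains c where "c \<in> K" "Min (f ` K) = f c"
proof -
  have "Min (f ` K) \<in> f ` K"
    using assms by (intro Min_in) auto
  then show ?thesis
    using that by (auto elim: imageE)
qed

lemma negligible_equidistant:
  fixes a b :: "'a::euclidean_space"
  assumes "a \<noteq> b"
  shows "negligible {q. norm (q - a) = norm (q - b)}"
proof -
  have "norm (q - a) = norm (q - b) \<longleftrightarrow> (2 *\<^sub>R (b - a)) \<bullet> q = b \<bullet> b - a \<bullet> a" for q
  proof -
    have "norm (q - a) = norm (q - b) \<longleftrightarrow> (norm (q - a))\<^sup>2 = (norm (q - b))\<^sup>2"
      by simp
    then show ?thesis
      by (simp add: power2_norm_eq_inner inner_commute algebra_simps)
  qed
  moreover have "2 *\<^sub>R (b - a) \<noteq> 0"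
    using assms by simp
  ultimately show ?thesis
    using negligible_hyperplane[of "2 *\<^sub>R (b - a)" "b \<bullet> b - a \<bullet> a"] by simp
qed

lemma measure_abs_le_tendsto_0:
  fixes g :: "'a::euclidean_space \<Rightarrow> real"
  assumes S: "compact S" and g: "continuous_on S g" and zeros: "negligible {x \<in> S. g x = 0}"
  shows "((\<lambda>d. measure lebesgue {x \<in> S. \<bar>g x\<bar> \<le> d}) \<longlongrightarrow> 0) (at_right 0)"
proof (rule tendsto_at_right_sequentially[OF zero_less_one])
  fix d :: "nat \<Rightarrow> real"
  assume d_pos: "\<And>k. 0 < d k" and "decseq d" and d_lim: "d \<longlonglongrightarrow> 0"
  define A where "A k = {x \<in> S. \<bar>g x\<bar> \<le> d k}" for k
  have "compact (A k)" for k
    unfolding A_def by (intro compact_Collect_le S continuous_intros g)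
  then have A_meas: "A k \<in> lmeasurable" for k
    by (simp add: lmeasurable_compact)
  have "decseq A"
    using \<open>decseq d\<close> unfolding A_def decseq_def by (force intro: order_trans)
  moreover have "emeasure lebesgue (A k) \<noteq> \<infinity>" for k
    using fmeasurableD2[OF A_meas] by simp
  ultimately have "(\<lambda>k. measure lebesgue (A k)) \<longlonglongrightarrow> measure lebesgue (\<Inter>k. A k)"
    using A_meas by (intro Lim_measure_decseq) auto
  moreover have "(\<Inter>k. A k) = {x \<in> S. g x = 0}"
  proof (intro equalityI subsetI)
    fix x assume "x \<in> (\<Inter>k. A k)"
    then have "x \<in> S" "\<bar>g x\<bar> \<le> 0"
      using LIMSEQ_le_const[OF d_lim, of "\<bar>g x\<bar>"] unfolding A_def by auto
    then show "x \<in> {x \<in> S. g x = 0}" by simp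
  qed (use d_pos less_imp_le in \<open>auto simp: A_def\<close>)
  ultimately show "(\<lambda>k. measure lebesgue {x \<in> S. \<bar>g x\<bar> \<le> d k}) \<longlonglongrightarrow> 0"
    using negligible_imp_measure0[OF zeros] unfolding A_def by simp
qed

section \<open>Capped quadratic cost\<close>

text \<open>Outside the band where the two branches are within (R + 1) |h| of each other, both minima
  take the same branch and only the quadratic term of the increment survives.\<close>

lemma min_half_sqdist_remainder_le:
  fixes y q h :: "'a::real_inner" and c R :: real
  assumes R: "norm (y - q) \<le> R" and h: "norm h \<le> 1"
  shows "\<bar>min c ((1/2) * (norm (q - (y + h)))\<^sup>2) - min c ((1/2) * (norm (q - y))\<^sup>2)
            - (if (1/2) * (norm (q - y))\<^sup>2 \<le> c then (y - q) \<bullet> h else 0)\<bar>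
         \<le> (1/2) * (norm h)\<^sup>2
            + (if \<bar>(1/2) * (norm (q - y))\<^sup>2 - c\<bar> \<le> (R + 1) * norm h then (2 * R + 1) * norm h else 0)"
proof -
  define a0 where "a0 = (1/2) * (norm (q - y))\<^sup>2"
  define a1 where "a1 = (1/2) * (norm (q - (y + h)))\<^sup>2"
  define d where "d = (y - q) \<bullet> h"
  define e where "e = (1/2) * (norm h)\<^sup>2"
  have "a1 - a0 = d + e"
    unfolding a0_def a1_def d_def e_def
    by (simp add: power2_norm_eq_inner inner_commute algebra_simps)
  moreover have "\<bar>d\<bar> \<le> R * norm h"
    unfolding d_def using Cauchy_Schwarz_ineq2[of "y - q" h] R
    by (meson mult_right_mono norm_ge_zero order_trans)
  moreover have "0 \<le> e"
    unfolding e_def by simp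
  moreover have "e \<le> norm h"
  proof -
    have "norm h * norm h \<le> norm h"
      using mult_left_le[OF h norm_ge_zero] .
    then show ?thesis
      using norm_ge_zero[of h] unfolding e_def power2_eq_square by linarith
  qed
  ultimately show ?thesis
    unfolding a0_def[symmetric] a1_def[symmetric] d_def[symmetric] e_def[symmetric]
    unfolding distrib_right mult.assoc
    by (cases "a0 \<le> c"; cases "a1 \<le> c") (auto simp: min_def; linarith)+
qed

definition capped_sqdist_cost ::
    "'a::euclidean_space set \<Rightarrow> ('a \<Rightarrow> real) \<Rightarrow> ('a \<Rightarrow> real) \<Rightarrow> 'a \<Rightarrow> real" where
  "capped_sqdist_cost Q \<phi> m x = integral Q (\<lambda>q. min (m q) ((1/2) * (norm (q - x))\<^sup>2) * \<phi> q)"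

definition capped_sqdist_gradient ::
    "'a::euclidean_space set \<Rightarrow> ('a \<Rightarrow> real) \<Rightarrow> ('a \<Rightarrow> real) \<Rightarrow> 'a \<Rightarrow> 'a" where
  "capped_sqdist_gradient Q \<phi> m y =
     integral Q (\<lambda>q. if (1/2) * (norm (q - y))\<^sup>2 \<le> m q then \<phi> q *\<^sub>R (y - q) else 0)"

lemma capped_sqdist_cost_has_integral:
  assumes "compact Q" "continuous_on Q \<phi>" "continuous_on Q m"
  shows "((\<lambda>q. min (m q) ((1/2) * (norm (q - x))\<^sup>2) * \<phi> q) has_integral capped_sqdist_cost Q \<phi> m x) Q"
  unfolding capped_sqdist_cost_def
  by (intro integrable_integral integrable_continuous_compact continuous_intros assms)

lemma capped_sqdist_gradient_has_integral:
  assumes Q: "compact Q" and \<phi>: "continuous_on Q \<phi>" and m: "continuous_on Q m"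
  shows "((\<lambda>q. if (1/2) * (norm (q - y))\<^sup>2 \<le> m q then \<phi> q *\<^sub>R (y - q) else 0)
           has_integral capped_sqdist_gradient Q \<phi> m y) Q"
proof -
  define S where "S = {q \<in> Q. (1/2) * (norm (q - y))\<^sup>2 \<le> m q}"
  have "compact S"
    unfolding S_def by (intro compact_Collect_le Q m continuous_intros)
  then have "(\<lambda>q. \<phi> q *\<^sub>R (y - q)) integrable_on S"
    by (intro integrable_continuous_compact continuous_intros continuous_on_subset[OF \<phi>])
       (auto simp: S_def)
  moreover have "S \<inter> Q = S"
    by (auto simp: S_def)
  ultimately have "(\<lambda>q. if q \<in> S then \<phi> q *\<^sub>R (y - q) else 0) integrable_on Q"
    by (simp add: integrable_restrict_Int)
  then have "(\<lambda>q. if (1/2) * (norm (q - y))\<^sup>2 \<le> m q then \<phi> q *\<^sub>R (y - q) else 0) integrable_on Q"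
    by (rule integrable_eq) (simp add: S_def)
  then show ?thesis
    unfolding capped_sqdist_gradient_def by (rule integrable_integral)
qed

lemma capped_sqdist_cost_remainder_le:
  fixes Q :: "'a::euclidean_space set"
  assumes Q: "compact Q" and \<phi>: "continuous_on Q \<phi>" and m: "continuous_on Q m"
    and R: "\<forall>q\<in>Q. norm (y - q) \<le> R" and M: "\<forall>q\<in>Q. \<bar>\<phi> q\<bar> \<le> M" and h: "norm h \<le> 1"
  shows "\<bar>capped_sqdist_cost Q \<phi> m (y + h) - capped_sqdist_cost Q \<phi> m y - capped_sqdist_gradient Q \<phi> m y \<bullet> h\<bar>
     \<le> (1/2) * (norm h)\<^sup>2 * integral Q (\<lambda>q. \<bar>\<phi> q\<bar>)
         + (2 * R + 1) * norm h * (M * measure lebesgue {q \<in> Q. \<bar>(1/2) * (norm (q - y))\<^sup>2 - m q\<bar> \<le> (R + 1) * norm h})"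
    (is "\<bar>?I\<bar> \<le> _ * ?J + _ * (M * measure lebesgue ?S)")
proof -
  define a where "a x q = (1/2) * (norm (q - x))\<^sup>2" for x q :: 'a
  define E where "E q = min (m q) (a (y + h) q) * \<phi> q - min (m q) (a y q) * \<phi> q
      - (if a y q \<le> m q then \<phi> q *\<^sub>R (y - q) else 0) \<bullet> h" for q
  define B where "B q = (1/2) * (norm h)\<^sup>2 * \<bar>\<phi> q\<bar> + (2 * R + 1) * norm h * (if q \<in> ?S then M else 0)" for q
  have E: "(E has_integral ?I) Q"
    unfolding E_def a_def
    using has_integral_linear[OF capped_sqdist_gradient_has_integral[OF Q \<phi> m] bounded_linear_inner_left]
    by (intro has_integral_diff capped_sqdist_cost_has_integral Q \<phi> m) (simp add: o_def)
  have "compact ?S"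
    by (intro compact_Collect_le Q m continuous_intros)
  then have B: "(B has_integral (1/2) * (norm h)\<^sup>2 * ?J + (2 * R + 1) * norm h * (M * measure lebesgue ?S)) Q"
    unfolding B_def
    by (intro has_integral_add has_integral_mult_right has_integral_const_restrict integrable_integral
        integrable_continuous_compact Q continuous_intros \<phi> lmeasurable_compact) auto
  have E_le_B: "norm (E q) \<le> B q" if "q \<in> Q" for q
  proof -
    have "norm (E q) = \<bar>min (m q) (a (y + h) q) - min (m q) (a y q)
        - (if a y q \<le> m q then (y - q) \<bullet> h else 0)\<bar> * \<bar>\<phi> q\<bar>"
      unfolding E_def by (simp add: abs_mult[symmetric] algebra_simps)
    also have "\<dots> \<le> ((1/2) * (norm h)\<^sup>2 + (if \<bar>a y q - m q\<bar> \<le> (R + 1) * norm h then (2 * R + 1) * norm h else 0))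
        * \<bar>\<phi> q\<bar>"
      unfolding a_def using R that h by (intro mult_right_mono min_half_sqdist_remainder_le) auto
    also have "\<dots> \<le> B q"
    proof -
      have "0 \<le> R"
        using R that norm_ge_zero order_trans by blast
      then have "(2 * R + 1) * norm h * \<bar>\<phi> q\<bar> \<le> (2 * R + 1) * norm h * M"
        using M that by (intro mult_left_mono) auto
      then show ?thesis
        using that unfolding B_def a_def by (simp add: distrib_right)
    qed
    finally show ?thesis .
  qed
  show ?thesis
    using integral_norm_bound_integral[OF has_integral_integrable[OF E] has_integral_integrable[OF B] E_le_B]
    by (simp add: integral_unique[OF E] integral_unique[OF B])
qed

lemma capped_sqdist_cost_has_derivative:
  fixes Q :: "'a::euclidean_space set"
  assumes Q: "compact Q" and \<phi>: "continuous_on Q \<phi>" and m: "continuous_on Q m"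
    and ties: "negligible {q \<in> Q. (1/2) * (norm (q - y))\<^sup>2 = m q}"
  shows "(capped_sqdist_cost Q \<phi> m has_derivative (\<lambda>h. capped_sqdist_gradient Q \<phi> m y \<bullet> h)) (at y)"
proof -
  obtain B where B: "B > 0" "\<forall>q\<in>Q. norm q \<le> B"
    using compact_imp_bounded[OF Q] bounded_pos by metis
  define R where "R = norm y + B"
  have "norm (y - q) \<le> R" if "q \<in> Q" for q
    using B(2) that norm_triangle_ineq4[of y q] unfolding R_def by (meson add_left_mono order_trans)
  moreover have "0 < R"
    using B(1) unfolding R_def by (simp add: add_nonneg_pos)
  ultimately have R: "\<forall>q\<in>Q. norm (y - q) \<le> R" "0 < R"
    by blast+
  have "bounded (\<phi> ` Q)"
    by (intro compact_imp_bounded compact_continuous_image \<phi> Q)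
  then obtain M where M: "\<forall>q\<in>Q. \<bar>\<phi> q\<bar> \<le> M"
    unfolding bounded_iff by auto
  define J where "J = integral Q (\<lambda>q. \<bar>\<phi> q\<bar>)"
  define \<mu> where "\<mu> d = measure lebesgue {q \<in> Q. \<bar>(1/2) * (norm (q - y))\<^sup>2 - m q\<bar> \<le> d}" for d
  have \<mu>_lim: "(\<mu> \<longlongrightarrow> 0) (at_right 0)"
    unfolding \<mu>_def using ties
    by (intro measure_abs_le_tendsto_0 Q continuous_intros m) simp
  moreover have radius_lim: "filterlim (\<lambda>h::'a. (R + 1) * norm h) (at_right 0) (at 0)"
    unfolding filterlim_at using R(2)
    by (auto intro!: tendsto_eq_intros eventually_at_in_open'[of UNIV] simp: eventually_at_filter)
  ultimately have "((\<lambda>h::'a. \<mu> ((R + 1) * norm h)) \<longlongrightarrow> 0) (at 0)"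
    by (rule filterlim_compose)
  then have bound_lim: "((\<lambda>h::'a. (1/2) * norm h * J + (2 * R + 1) * (M * \<mu> ((R + 1) * norm h))) \<longlongrightarrow> 0) (at 0)"
    by (auto intro!: tendsto_eq_intros)
  have "norm (capped_sqdist_cost Q \<phi> m (y + h) - capped_sqdist_cost Q \<phi> m y - capped_sqdist_gradient Q \<phi> m y \<bullet> h) / norm h
      \<le> (1/2) * norm h * J + (2 * R + 1) * (M * \<mu> ((R + 1) * norm h))"
    if "h \<noteq> 0" "norm h \<le> 1" for h
    using capped_sqdist_cost_remainder_le[OF Q \<phi> m R(1) M that(2)] that(1)
    by (simp add: divide_le_eq J_def \<mu>_def power2_eq_square algebra_simps)
  then have "\<forall>\<^sub>F h in at 0. norm (norm (capped_sqdist_cost Q \<phi> m (y + h) - capped_sqdist_cost Q \<phi> m y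
      - capped_sqdist_gradient Q \<phi> m y \<bullet> h) / norm h)
      \<le> (1/2) * norm h * J + (2 * R + 1) * (M * \<mu> ((R + 1) * norm h))"
    unfolding eventually_at by (intro exI[of _ 1]) auto
  then show ?thesis
    unfolding has_derivative_at
    by (auto intro: bounded_linear_inner_right Lim_null_comparison[OF _ bound_lim])
qed

section \<open>Minimal pair means\<close>

text \<open>With f k = |q - p k|^2 and K = {1..n}, this is the integrand of perfH.\<close>

definition min_pair_mean :: "('i::linorder \<Rightarrow> real) \<Rightarrow> 'i set \<Rightarrow> real" where
  "min_pair_mean f K = Min ((\<lambda>(a, b). (1/2) * (f a + f b)) ` {(a, b). a \<in> K \<and> b \<in> K \<and> a < b})"

lemma finite_ordered_pairs: "finite K \<Longrightarrow> finite {(a, b). a \<in> K \<and> b \<in> K \<and> a < b}"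
  by (rule finite_subset[of _ "K \<times> K"]) auto

lemma min_pair_mean_cong:
  "(\<And>k. k \<in> K \<Longrightarrow> f k = g k) \<Longrightarrow> min_pair_mean f K = min_pair_mean g K"
  unfolding min_pair_mean_def by (intro arg_cong[where f = Min] image_cong) auto

lemma min_pair_mean_le:
  assumes "finite K" "a \<in> K" "b \<in> K" "a \<noteq> b"
  shows "min_pair_mean f K \<le> (1/2) * (f a + f b)"
proof -
  have "(min a b, max a b) \<in> {(a, b). a \<in> K \<and> b \<in> K \<and> a < b}"
    using assms by (auto simp: min_def max_def)
  then have mem: "(\<lambda>(a, b). (1/2) * (f a + f b)) (min a b, max a b)
      \<in> (\<lambda>(a, b). (1/2) * (f a + f b)) ` {(a, b). a \<in> K \<and> b \<in> K \<and> a < b}"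
    by (rule imageI)
  have "min_pair_mean f K \<le> (1/2) * (f (min a b) + f (max a b))"
    using Min_le[OF finite_imageI[OF finite_ordered_pairs[OF assms(1)]] mem]
    unfolding min_pair_mean_def by simp
  then show ?thesis
    by (simp add: min_def max_def split: if_splits)
qed

lemma min_pair_mean_attained:
  assumes "finite K" "2 \<le> card K"
  obtains a b where "a \<in> K" "b \<in> K" "a \<noteq> b" "min_pair_mean f K = (1/2) * (f a + f b)"
proof -
  have "K \<noteq> {}"
    using assms(2) by auto
  then obtain a where a: "a \<in> K"
    by blast
  have "card (K - {a}) \<noteq> 0"
    using a assms by (simp add: card_Diff_singleton)
  then have "K - {a} \<noteq> {}"
    by (metis card.empty)
  then obtain b where b: "b \<in> K" "b \<noteq> a"
    by blast
  have "(min a b, max a b) \<in> {(a, b). a \<in> K \<and> b \<in> K \<and> a < b}"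
    using a b by (auto simp: min_def max_def)
  then have "min_pair_mean f K \<in> (\<lambda>(a, b). (1/2) * (f a + f b)) ` {(a, b). a \<in> K \<and> b \<in> K \<and> a < b}"
    unfolding min_pair_mean_def using assms(1) by (intro Min_in) (auto simp: finite_ordered_pairs)
  then obtain c where "c \<in> {(a, b). a \<in> K \<and> b \<in> K \<and> a < b}"
      "min_pair_mean f K = (\<lambda>(a, b). (1/2) * (f a + f b)) c"
    by (rule imageE)
  then show ?thesis
    using that[of "fst c" "snd c"] by (cases c) auto
qed

lemma min_pair_mean_insert:
  assumes K: "finite K" "2 \<le> card K" and i: "i \<notin> K"
  shows "min_pair_mean f (insert i K) = min (min_pair_mean f K) ((1/2) * (f i + Min (f ` K)))"
proof (rule antisym)
  have iK: "finite (insert i K)" "2 \<le> card (insert i K)"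
    using K i by auto
  have Min_le_f: "Min (f ` K) \<le> f k" if "k \<in> K" for k
    using K(1) that by simp
  obtain c where c: "c \<in> K" "Min (f ` K) = f c"
    using K by (metis Min_image_attained card.empty not_numeral_le_zero)
  obtain a b where ab: "a \<in> K" "b \<in> K" "a \<noteq> b" "min_pair_mean f K = (1/2) * (f a + f b)"
    using min_pair_mean_attained[OF K] .
  show "min_pair_mean f (insert i K) \<le> min (min_pair_mean f K) ((1/2) * (f i + Min (f ` K)))"
    using min_pair_mean_le[OF iK(1), of a b f] min_pair_mean_le[OF iK(1), of i c f] ab c i by auto
  obtain a b where ab: "a \<in> insert i K" "b \<in> insert i K" "a \<noteq> b"
    "min_pair_mean f (insert i K) = (1/2) * (f a + f b)"
    using min_pair_mean_attained[OF iK] .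
  show "min (min_pair_mean f K) ((1/2) * (f i + Min (f ` K))) \<le> min_pair_mean f (insert i K)"
  proof (cases "a = i \<or> b = i")
    case True
    then show ?thesis
      using ab Min_le_f[of a] Min_le_f[of b] by (auto simp: min_le_iff_disj)
  next
    case False
    then show ?thesis
      using ab min_pair_mean_le[OF K(1), of a b f] by (auto simp: min_le_iff_disj)
  qed
qed

lemma min_pair_mean_eq_Min_add:
  assumes K: "finite K" "2 \<le> card K"
  obtains k where "k \<in> K" "min_pair_mean f K = (1/2) * (Min (f ` K) + f k)"
proof -
  obtain c where c: "c \<in> K" "Min (f ` K) = f c"
    using K by (metis Min_image_attained card.empty not_numeral_le_zero)
  obtain a b where ab: "a \<in> K" "b \<in> K" "a \<noteq> b" "min_pair_mean f K = (1/2) * (f a + f b)"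
    using min_pair_mean_attained[OF K] .
  define k where "k = (if c = b then a else b)"
  have k: "k \<in> K" "c \<noteq> k"
    using ab c unfolding k_def by auto
  have "f c \<le> f a"
    using c(2) K(1) ab(1) by (metis Min_le finite_imageI imageI)
  then have "f c + f k \<le> f a + f b"
    unfolding k_def by auto
  then have "min_pair_mean f K = (1/2) * (f c + f k)"
    using min_pair_mean_le[OF K(1) c(1) k, of f] ab(4) by argo
  then show ?thesis
    using that k(1) c(2) by simp
qed

lemma Min_add_le_min_pair_mean_iff:
  assumes K: "finite K" "2 \<le> card K"
  shows "(1/2) * (f i + Min (f ` K)) \<le> min_pair_mean f K
     \<longleftrightarrow> (\<exists>j\<in>K. \<forall>v\<in>{i, j}. \<forall>w\<in>K - {j}. f v \<le> f w)"
proof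
  have Min_le_f: "Min (f ` K) \<le> f k" if "k \<in> K" for k
    using K(1) that by simp
  obtain c where c: "c \<in> K" "Min (f ` K) = f c"
    using K by (metis Min_image_attained card.empty not_numeral_le_zero)
  {
    assume le: "(1/2) * (f i + Min (f ` K)) \<le> min_pair_mean f K"
    have "f i \<le> f w" if "w \<in> K - {c}" for w
      using le min_pair_mean_le[OF K(1) c(1), of w f] that c(2) by auto
    then show "\<exists>j\<in>K. \<forall>v\<in>{i, j}. \<forall>w\<in>K - {j}. f v \<le> f w"
      using c Min_le_f by (intro bexI[of _ c]) auto
  next
    assume "\<exists>j\<in>K. \<forall>v\<in>{i, j}. \<forall>w\<in>K - {j}. f v \<le> f w"
    then obtain j where j: "j \<in> K" "\<forall>v\<in>{i, j}. \<forall>w\<in>K - {j}. f v \<le> f w"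
      by blast
    have "Min (f ` K) = f j"
      using j c Min_le_f[OF j(1)] by (cases "c = j") force+
    moreover obtain a b where ab: "a \<in> K" "b \<in> K" "a \<noteq> b" "min_pair_mean f K = (1/2) * (f a + f b)"
      using min_pair_mean_attained[OF K] .
    moreover have "f i + f j \<le> f a + f b"
      using j ab by (cases "a = j"; cases "b = j") force+
    ultimately show "(1/2) * (f i + Min (f ` K)) \<le> min_pair_mean f K"
      by simp
  }
qed

lemma continuous_on_min_pair_mean:
  assumes "finite K" "2 \<le> card K" "\<And>k. k \<in> K \<Longrightarrow> continuous_on S (\<lambda>x. f x k)"
  shows "continuous_on S (\<lambda>x. min_pair_mean (f x) K)"
proof -
  obtain a b where "a \<in> K" "b \<in> K" "a \<noteq> b"
    using min_pair_mean_attained[OF assms(1,2)] by metis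
  then have "(min a b, max a b) \<in> {(a, b). a \<in> K \<and> b \<in> K \<and> a < b}"
    by (auto simp: min_def max_def)
  then show ?thesis
    unfolding min_pair_mean_def using assms(1,3)
    by (intro continuous_on_Min_image finite_ordered_pairs) (auto intro!: continuous_intros)
qed

section \<open>Order-2 Voronoi cells and the performance function\<close>

definition nearest_half_sqdist :: "('i \<Rightarrow> 'a::real_normed_vector) \<Rightarrow> 'i set \<Rightarrow> 'a \<Rightarrow> real" where
  "nearest_half_sqdist p K q = (1/2) * Min ((\<lambda>k. (norm (q - p k))\<^sup>2) ` K)"

definition second_half_sqdist :: "('i::linorder \<Rightarrow> 'a::real_normed_vector) \<Rightarrow> 'i set \<Rightarrow> 'a \<Rightarrow> real" where
  "second_half_sqdist p K q = min_pair_mean (\<lambda>k. (norm (q - p k))\<^sup>2) K - nearest_half_sqdist p K q"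

lemma continuous_on_nearest_half_sqdist:
  assumes "finite K" "K \<noteq> {}"
  shows "continuous_on S (nearest_half_sqdist p K)"
  unfolding nearest_half_sqdist_def using assms
  by (intro continuous_intros continuous_on_Min_image[where g = "\<lambda>k q. (norm (q - p k))\<^sup>2"]) auto

lemma continuous_on_second_half_sqdist:
  assumes "finite K" "2 \<le> card K"
  shows "continuous_on S (second_half_sqdist p K)"
  unfolding second_half_sqdist_def using assms
  by (intro continuous_intros continuous_on_nearest_half_sqdist continuous_on_min_pair_mean) auto

lemma second_half_sqdist_attained:
  assumes "finite K" "2 \<le> card K"
  obtains k where "k \<in> K" "second_half_sqdist p K q = (1/2) * (norm (q - p k))\<^sup>2"
proof -
  obtain k where "k \<in> K"
    "min_pair_mean (\<lambda>k. (norm (q - p k))\<^sup>2) K = (1/2) * (Min ((\<lambda>k. (norm (q - p k))\<^sup>2) ` K) + (norm (q - p k))\<^sup>2)"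
    using min_pair_mean_eq_Min_add[OF assms] .
  then show ?thesis
    using that unfolding second_half_sqdist_def nearest_half_sqdist_def by (simp add: algebra_simps)
qed

lemma min_pair_mean_update_eq:
  fixes p :: "'i::linorder \<Rightarrow> 'a::real_normed_vector"
  assumes K: "finite K" "2 \<le> card K" and i: "i \<notin> K"
  shows "min_pair_mean (\<lambda>k. (norm (q - (p(i := y)) k))\<^sup>2) (insert i K)
       = nearest_half_sqdist p K q + min (second_half_sqdist p K q) ((1/2) * (norm (q - y))\<^sup>2)"
proof -
  have "(\<lambda>k. (norm (q - (p(i := y)) k))\<^sup>2) ` K = (\<lambda>k. (norm (q - p k))\<^sup>2) ` K"
    using i by (intro image_cong) auto
  moreover have "min_pair_mean (\<lambda>k. (norm (q - (p(i := y)) k))\<^sup>2) K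
      = min_pair_mean (\<lambda>k. (norm (q - p k))\<^sup>2) K"
    using i by (intro min_pair_mean_cong) auto
  ultimately show ?thesis
    unfolding min_pair_mean_insert[OF K i] second_half_sqdist_def nearest_half_sqdist_def
    by (simp add: min_def algebra_simps)
qed

lemma indices_except:
  assumes "3 \<le> n" "i \<in> {1..n::nat}"
  shows "finite ({1..n} - {i})" "2 \<le> card ({1..n} - {i})" "i \<notin> {1..n} - {i}"
    "insert i ({1..n} - {i}) = {1..n}"
  using assms by (auto simp: card_Diff_singleton)

lemma perfH_update_eq:
  fixes p :: "nat \<Rightarrow> pt"
  assumes Q: "compact Q" and \<phi>: "continuous_on Q \<phi>" and n: "3 \<le> n" and i: "i \<in> {1..n}"
  defines "K \<equiv> {1..n} - {i}"
  shows "perfH Q \<phi> n (p(i := y))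
       = integral Q (\<lambda>q. nearest_half_sqdist p K q * \<phi> q) + capped_sqdist_cost Q \<phi> (second_half_sqdist p K) y"
proof -
  note K = indices_except[OF n i, folded K_def]
  have pairs: "{(a, b). 1 \<le> a \<and> a < b \<and> b \<le> n} = {(a, b). a \<in> insert i K \<and> b \<in> insert i K \<and> a < b}"
    unfolding K(4) by auto
  have "Min ((\<lambda>(a, b). (1/2) * ((norm (q - (p(i := y)) a))\<^sup>2 + (norm (q - (p(i := y)) b))\<^sup>2))
        ` {(a, b). 1 \<le> a \<and> a < b \<and> b \<le> n})
      = nearest_half_sqdist p K q + min (second_half_sqdist p K q) ((1/2) * (norm (q - y))\<^sup>2)" for q
    using min_pair_mean_update_eq[OF K(1-3), of q p y] unfolding min_pair_mean_def pairs .
  then have "perfH Q \<phi> n (p(i := y)) = integral Q (\<lambda>q. nearest_half_sqdist p K q * \<phi> q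
      + min (second_half_sqdist p K q) ((1/2) * (norm (q - y))\<^sup>2) * \<phi> q)"
    unfolding perfH_def by (simp only: distrib_right)
  also have "\<dots> = integral Q (\<lambda>q. nearest_half_sqdist p K q * \<phi> q) + capped_sqdist_cost Q \<phi> (second_half_sqdist p K) y"
    unfolding capped_sqdist_cost_def using K(1,2)
    by (intro integral_add integrable_continuous_compact Q continuous_intros \<phi>
        continuous_on_nearest_half_sqdist continuous_on_second_half_sqdist) auto
  finally show ?thesis .
qed

lemma negligible_not_inj_on_dist:
  fixes p :: "'i \<Rightarrow> 'a::euclidean_space"
  assumes I: "finite I" and p: "inj_on p I"
  shows "negligible {q. \<not> inj_on (\<lambda>k. norm (q - p k)) I}"
proof (rule negligible_subset)
  define E where "E = (\<lambda>kl. {q. norm (q - p (fst kl)) = norm (q - p (snd kl))}) ` (Sigma I (\<lambda>k. I - {k}))"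
  show "negligible (\<Union>E)"
  proof (rule negligible_Union)
    show "finite E"
      unfolding E_def using I by simp
  next
    fix T assume "T \<in> E"
    then obtain kl where "kl \<in> Sigma I (\<lambda>k. I - {k})" "T = {q. norm (q - p (fst kl)) = norm (q - p (snd kl))}"
      unfolding E_def by (rule imageE)
    then show "negligible T"
      using p by (cases kl) (auto intro!: negligible_equidistant dest: inj_onD)
  qed
  show "{q. \<not> inj_on (\<lambda>k. norm (q - p k)) I} \<subseteq> \<Union>E"
    unfolding E_def inj_on_def by force
qed

lemma negligible_second_half_sqdist_ties:
  fixes p :: "'i::linorder \<Rightarrow> 'a::euclidean_space"
  assumes K: "finite K" "2 \<le> card K" and i: "i \<notin> K" and p: "inj_on p (insert i K)"
  shows "negligible {q \<in> Q. (1/2) * (norm (q - p i))\<^sup>2 = second_half_sqdist p K q}"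
proof -
  have "negligible {q. \<not> inj_on (\<lambda>k. norm (q - p k)) (insert i K)}"
    using K(1) p by (intro negligible_not_inj_on_dist) auto
  moreover have "{q \<in> Q. (1/2) * (norm (q - p i))\<^sup>2 = second_half_sqdist p K q}
      \<subseteq> {q. \<not> inj_on (\<lambda>k. norm (q - p k)) (insert i K)}"
  proof (intro subsetI CollectI notI)
    fix q assume "q \<in> {q \<in> Q. (1/2) * (norm (q - p i))\<^sup>2 = second_half_sqdist p K q}"
      and inj: "inj_on (\<lambda>k. norm (q - p k)) (insert i K)"
    then have tie: "(1/2) * (norm (q - p i))\<^sup>2 = second_half_sqdist p K q"
      by simp
    obtain k where "k \<in> K" "second_half_sqdist p K q = (1/2) * (norm (q - p k))\<^sup>2"
      using second_half_sqdist_attained[OF K] .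
    then show False
      using tie i inj_onD[OF inj, of i k] by auto
  qed
  ultimately show ?thesis
    by (rule negligible_subset)
qed

lemma vor2_eq:
  "vor2 Q n p i j = {q \<in> Q. \<forall>v\<in>{i, j}. \<forall>w\<in>{1..n} - {i, j}. (norm (q - p v))\<^sup>2 \<le> (norm (q - p w))\<^sup>2}"
  unfolding vor2_def dist_norm by simp

lemma compact_vor2:
  assumes "compact Q"
  shows "compact (vor2 Q n p i j)"
proof -
  have "vor2 Q n p i j = Q \<inter> (\<Inter>v\<in>{i, j}. \<Inter>w\<in>{1..n} - {i, j}. {q. dist q (p v) \<le> dist q (p w)})"
    unfolding vor2_def by auto
  moreover have "closed {q. dist q (p v) \<le> dist q (p w)}" for v w
    by (intro closed_Collect_le continuous_intros)
  ultimately show ?thesis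
    using assms by (metis (no_types, lifting) closed_INT compact_Int_closed)
qed

text \<open>For a cell of zero mass the centroid is the junk value 0 (division by zero), but then the
  first moment vanishes as well since phi is nonnegative and the cell is bounded.\<close>

lemma mass_scaleR_centroid_diff:
  assumes V: "compact V" and \<phi>: "continuous_on V \<phi>" and nonneg: "\<forall>q\<in>V. 0 \<le> \<phi> q"
  shows "mass \<phi> V *\<^sub>R (centroid \<phi> V - c) = integral V (\<lambda>q. \<phi> q *\<^sub>R (q - c))"
proof -
  have int_q: "(\<lambda>q. \<phi> q *\<^sub>R q) integrable_on V" and int_\<phi>: "\<phi> integrable_on V"
    by (intro integrable_continuous_compact V continuous_intros \<phi>)+
  have "integral V (\<lambda>q. \<phi> q *\<^sub>R (q - c)) = integral V (\<lambda>q. \<phi> q *\<^sub>R q) - mass \<phi> V *\<^sub>R c"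
    unfolding mass_def scaleR_diff_right
    using int_q integrable_on_scaleR_left[OF int_\<phi>, of c]
      integral_unique[OF has_integral_scaleR_left[OF integrable_integral[OF int_\<phi>], of c]]
    by (simp add: integral_diff)
  moreover have "integral V (\<lambda>q. \<phi> q *\<^sub>R q) = 0" if "mass \<phi> V = 0"
  proof -
    obtain B where B: "\<forall>q\<in>V. norm q \<le> B"
      using compact_imp_bounded[OF V] bounded_iff by blast
    have "norm (integral V (\<lambda>q. \<phi> q *\<^sub>R q)) \<le> integral V (\<lambda>q. B * \<phi> q)"
      using int_q integrable_on_cmult_left[OF int_\<phi>, of B] B nonneg
      by (intro integral_norm_bound_integral) (auto simp: mult.commute[of B] mult_left_mono)
    also have "\<dots> = 0"
      using that by (simp add: mass_def)
    finally show ?thesis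
      by simp
  qed
  ultimately show ?thesis
    unfolding centroid_def by (cases "mass \<phi> V = 0") (simp_all add: scaleR_diff_right)
qed

lemma sum_vor2_indicator:
  fixes p :: "nat \<Rightarrow> pt"
  assumes n: "3 \<le> n" and i: "i \<in> {1..n}" and q: "q \<in> Q"
    and inj: "inj_on (\<lambda>k. norm (q - p k)) {1..n}"
  shows "(\<Sum>j\<in>Pidx Q n p i. if q \<in> vor2 Q n p i j then x else 0)
       = (if (1/2) * (norm (q - p i))\<^sup>2 \<le> second_half_sqdist p ({1..n} - {i}) q then x else 0)"
proof -
  define K where "K = {1..n} - {i}"
  define f where "f k = (norm (q - p k))\<^sup>2" for k
  note K = indices_except[OF n i, folded K_def]
  have cell: "q \<in> vor2 Q n p i j \<longleftrightarrow> (\<forall>v\<in>{i, j}. \<forall>w\<in>K - {j}. f v \<le> f w)" if "j \<in> K" for j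
  proof -
    have "{1..n} - {i, j} = K - {j}"
      unfolding K_def by auto
    then show ?thesis
      using q unfolding vor2_eq f_def by simp
  qed
  have "(1/2) * f i \<le> second_half_sqdist p K q \<longleftrightarrow> (1/2) * (f i + Min (f ` K)) \<le> min_pair_mean f K"
    unfolding second_half_sqdist_def nearest_half_sqdist_def f_def by (simp add: algebra_simps)
  also have "\<dots> \<longleftrightarrow> (\<exists>j\<in>K. q \<in> vor2 Q n p i j)"
    using Min_add_le_min_pair_mean_iff[OF K(1,2)] cell by blast
  finally have cond: "(1/2) * f i \<le> second_half_sqdist p K q \<longleftrightarrow> (\<exists>j\<in>K. q \<in> vor2 Q n p i j)" .
  have unique: "j = j'" if "j \<in> K" "j' \<in> K" "q \<in> vor2 Q n p i j" "q \<in> vor2 Q n p i j'" for j j'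
  proof (rule ccontr)
    assume "j \<noteq> j'"
    then have "f j \<le> f j'" "f j' \<le> f j"
      using that cell by auto
    then have "norm (q - p j) = norm (q - p j')"
      unfolding f_def by simp
    then show False
      using \<open>j \<noteq> j'\<close> inj_onD[OF inj] that(1,2) unfolding K_def by blast
  qed
  have "{j \<in> Pidx Q n p i. q \<in> vor2 Q n p i j} = {j \<in> K. q \<in> vor2 Q n p i j}"
    unfolding Pidx_def K_def by auto
  then have "(\<Sum>j\<in>Pidx Q n p i. if q \<in> vor2 Q n p i j then x else 0) = (\<Sum>j\<in>{j \<in> K. q \<in> vor2 Q n p i j}. x)"
    by (simp add: sum.inter_filter[symmetric] Pidx_def)
  also have "\<dots> = (if \<exists>j\<in>K. q \<in> vor2 Q n p i j then x else 0)"
  proof (cases "\<exists>j\<in>K. q \<in> vor2 Q n p i j")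
    case True
    then obtain j where "j \<in> K" "q \<in> vor2 Q n p i j"
      by blast
    then have "{j \<in> K. q \<in> vor2 Q n p i j} = {j}"
      using unique by blast
    then show ?thesis
      using True by simp
  next
    case False
    then have "{j \<in> K. q \<in> vor2 Q n p i j} = {}"
      by blast
    then have "(\<Sum>j\<in>{j \<in> K. q \<in> vor2 Q n p i j}. x) = 0"
      by (simp only: sum.empty)
    then show ?thesis
      unfolding if_not_P[OF False] .
  qed
  finally show ?thesis
    using cond unfolding K_def f_def by simp
qed

lemma capped_sqdist_gradient_eq_sum_vor2:
  fixes p :: "nat \<Rightarrow> pt"
  assumes Q: "compact Q" and \<phi>: "continuous_on Q \<phi>" and nonneg: "\<forall>q\<in>Q. 0 \<le> \<phi> q"
    and n: "3 \<le> n" and i: "i \<in> {1..n}" and p: "inj_on p {1..n}"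
  shows "capped_sqdist_gradient Q \<phi> (second_half_sqdist p ({1..n} - {i})) (p i)
       = - (\<Sum>j\<in>Pidx Q n p i. mass \<phi> (vor2 Q n p i j) *\<^sub>R (centroid \<phi> (vor2 Q n p i j) - p i))"
proof -
  define V where "V j = vor2 Q n p i j" for j
  define g where "g q = \<phi> q *\<^sub>R (p i - q)" for q
  have VQ: "V j \<subseteq> Q" for j
    unfolding V_def vor2_def by auto
  have finite_P: "finite (Pidx Q n p i)"
    unfolding Pidx_def by simp
  have "mass \<phi> (V j) *\<^sub>R (centroid \<phi> (V j) - p i) = integral (V j) (\<lambda>q. - g q)" for j
    unfolding g_def V_def using VQ[of j] nonneg
    by (subst mass_scaleR_centroid_diff) (auto simp: V_def compact_vor2[OF Q] scaleR_diff_right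
        intro: continuous_on_subset[OF \<phi>])
  then have sum_eq: "- (\<Sum>j\<in>Pidx Q n p i. mass \<phi> (V j) *\<^sub>R (centroid \<phi> (V j) - p i))
      = (\<Sum>j\<in>Pidx Q n p i. integral (V j) g)"
    by (simp add: sum_negf integral_neg)
  have "g integrable_on V j" for j
    unfolding g_def V_def using VQ[of j, unfolded V_def]
    by (intro integrable_continuous_compact compact_vor2 Q continuous_intros continuous_on_subset[OF \<phi>])
  then have "((\<lambda>q. if q \<in> V j then g q else 0) has_integral integral (V j) g) Q" for j
    using has_integral_restrict[OF VQ] integrable_integral by blast
  then have sum_integral: "((\<lambda>q. \<Sum>j\<in>Pidx Q n p i. if q \<in> V j then g q else 0)
      has_integral (\<Sum>j\<in>Pidx Q n p i. integral (V j) g)) Q"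
    by (intro has_integral_sum finite_P)
  have ties: "negligible {q. \<not> inj_on (\<lambda>k. norm (q - p k)) {1..n}}"
    using p by (intro negligible_not_inj_on_dist) auto
  have cells: "(if (1/2) * (norm (q - p i))\<^sup>2 \<le> second_half_sqdist p ({1..n} - {i}) q then g q else 0)
      = (\<Sum>j\<in>Pidx Q n p i. if q \<in> V j then g q else 0)"
    if "q \<in> Q - {q. \<not> inj_on (\<lambda>k. norm (q - p k)) {1..n}}" for q
    using that sum_vor2_indicator[OF n i, of q Q p "g q"] unfolding V_def by auto
  have "((\<lambda>q. if (1/2) * (norm (q - p i))\<^sup>2 \<le> second_half_sqdist p ({1..n} - {i}) q then g q else 0)
      has_integral (\<Sum>j\<in>Pidx Q n p i. integral (V j) g)) Q"
    by (rule has_integral_spike[OF ties cells sum_integral])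
  then have "capped_sqdist_gradient Q \<phi> (second_half_sqdist p ({1..n} - {i})) (p i)
      = (\<Sum>j\<in>Pidx Q n p i. integral (V j) g)"
    unfolding capped_sqdist_gradient_def g_def by (rule integral_unique)
  then show ?thesis
    using sum_eq unfolding V_def by simp
qed

lemma sum_mass_scaleR_centroid_diff:
  assumes "massW Q \<phi> n p i \<noteq> 0"
  shows "(\<Sum>j\<in>Pidx Q n p i. mass \<phi> (vor2 Q n p i j) *\<^sub>R (centroid \<phi> (vor2 Q n p i j) - p i))
       = massW Q \<phi> n p i *\<^sub>R (centroidW Q \<phi> n p i - p i)"
  using assms unfolding centroidW_def
  by (simp add: scaleR_diff_right sum_subtractf scaleR_sum_left massW_def)

lemma C2_on_imp_continuous_on: "C2_on U f \<Longrightarrow> continuous_on U f"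
  unfolding C2_on_def by (meson continuous_at_imp_continuous_on has_derivative_continuous)

theorem mainTheorem4:
  fixes Q :: "pt set" and \<phi> :: "pt \<Rightarrow> real" and n :: nat and p :: "nat \<Rightarrow> pt" and i :: nat
  assumes Q: "compact Q" "convex Q" "polytope Q" "interior Q \<noteq> {}"
    and phi_nonneg: "\<forall>q\<in>Q. 0 \<le> \<phi> q"
    and phi_C2: "\<exists>U. open U \<and> Q \<subseteq> U \<and> C2_on U \<phi>"
    and n: "n \<ge> 3"
    and pQ: "\<forall>k\<in>{1..n}. p k \<in> Q"
    and distinct: "\<forall>k\<in>{1..n}. \<forall>l\<in>{1..n}. k \<noteq> l \<longrightarrow> p k \<noteq> p l"
    and massW_pos: "\<forall>k\<in>{1..n}. massW Q \<phi> n p k > 0"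
    and i: "i \<in> {1..n}"
  shows "((\<lambda>x. perfH Q \<phi> n (p(i := x))) has_derivative
           (\<lambda>v. (- (\<Sum>j\<in>Pidx Q n p i.
                     mass \<phi> (vor2 Q n p i j) *\<^sub>R (centroid \<phi> (vor2 Q n p i j) - p i))) \<bullet> v))
           (at (p i))
       \<and> (- (\<Sum>j\<in>Pidx Q n p i.
                 mass \<phi> (vor2 Q n p i j) *\<^sub>R (centroid \<phi> (vor2 Q n p i j) - p i)))
         = - (massW Q \<phi> n p i *\<^sub>R (centroidW Q \<phi> n p i - p i))"
proof
  have \<phi>: "continuous_on Q \<phi>"
    using phi_C2 C2_on_imp_continuous_on continuous_on_subset by blast
  have p: "inj_on p {1..n}"
    using distinct by (auto simp: inj_on_def)
  define K where "K = {1..n} - {i}"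
  note K = indices_except[OF n i, folded K_def]
  have cost_deriv: "(capped_sqdist_cost Q \<phi> (second_half_sqdist p K)
      has_derivative (\<lambda>h. capped_sqdist_gradient Q \<phi> (second_half_sqdist p K) (p i) \<bullet> h)) (at (p i))"
    using K p by (intro capped_sqdist_cost_has_derivative Q(1) \<phi> continuous_on_second_half_sqdist
        negligible_second_half_sqdist_ties) auto
  show "((\<lambda>x. perfH Q \<phi> n (p(i := x))) has_derivative
      (\<lambda>v. (- (\<Sum>j\<in>Pidx Q n p i. mass \<phi> (vor2 Q n p i j) *\<^sub>R (centroid \<phi> (vor2 Q n p i j) - p i))) \<bullet> v))
      (at (p i))"
    unfolding perfH_update_eq[OF Q(1) \<phi> n i] capped_sqdist_gradient_eq_sum_vor2[OF Q(1) \<phi> phi_nonneg n i p, symmetric]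
      K_def[symmetric]
    using has_derivative_add[OF has_derivative_const cost_deriv] by simp
  show "- (\<Sum>j\<in>Pidx Q n p i. mass \<phi> (vor2 Q n p i j) *\<^sub>R (centroid \<phi> (vor2 Q n p i j) - p i))
      = - (massW Q \<phi> n p i *\<^sub>R (centroidW Q \<phi> n p i - p i))"
    using massW_pos i sum_mass_scaleR_centroid_diff[of Q \<phi> n p i] by force
qed

end
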